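(* Let $K=\operatorname{cone}\{e_1,\dots,e_m\}\subset\mathbb{R}^m$ be a simplicial cone which is an isotone projection cone. Then for every $\varepsilon\in\mathcal{E}$, $K_\varepsilon$ is a $K$-isotone projection set.
   Context: $\mathbb{R}^m$ carries the standard inner product. A simplicial cone is $\operatorname{cone}\{e_1,\dots,e_m\}=\{\sum t^ie_i:t^i\ge0\}$ with $e_1,\dots,e_m$ linearly independent. $\mathcal{E}=\{\varepsilon\in\mathbb{R}^m:|\varepsilon^i|=1,\ i=1,\dots,m\}$ and $K_\varepsilon=\operatorname{cone}\{\varepsilon^1e_1,\dots,\varepsilon^me_m\}$. $x\le_K y$ means $y-x\in K$. A closed convex set $D$ is a $K$-isotone projection set if $x\le_K y$ implies $P_Dx\le_K P_Dy$, where $P_D$ is the metric projection onto $D$. A proper cone $K$ is an isotone projection cone if $K$ itself is a $K$-isotone projection set. *)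

theory Defs
  imports "HOL-Analysis.Analysis"
begin

definition simplicial_cone :: "('m::finite \<Rightarrow> real^'m) \<Rightarrow> (real^'m) set" where
  "simplicial_cone e = {(\<Sum>i\<in>UNIV. t i *\<^sub>R e i) | t. \<forall>i. t i \<ge> 0}"

definition lin_indep_family :: "('m::finite \<Rightarrow> real^'m) \<Rightarrow> bool" where
  "lin_indep_family e \<longleftrightarrow> inj e \<and> independent (range e)"

definition cone_le :: "(real^'m) set \<Rightarrow> real^'m \<Rightarrow> real^'m \<Rightarrow> bool" where
  "cone_le K x y \<longleftrightarrow> y - x \<in> K"

definition isotone_projection_set :: "(real^'m) set \<Rightarrow> (real^'m) set \<Rightarrow> bool" where
  "isotone_projection_set K D \<longleftrightarrow> closed D \<and> convex D \<and> D \<noteq> {} \<and>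
     (\<forall>x y. cone_le K x y \<longrightarrow> cone_le K (closest_point D x) (closest_point D y))"

definition proper_cone :: "(real^'m) set \<Rightarrow> bool" where
  "proper_cone K \<longleftrightarrow> closed K \<and> convex K \<and> cone K \<and> K \<inter> uminus ` K = {0}
     \<and> interior K \<noteq> {}"

definition isotone_projection_cone :: "(real^'m) set \<Rightarrow> bool" where
  "isotone_projection_cone K \<longleftrightarrow> proper_cone K \<and> isotone_projection_set K K"

definition sign_vectors :: "('m \<Rightarrow> real) set" where
  "sign_vectors = {\<epsilon>. \<forall>i. \<bar>\<epsilon> i\<bar> = 1}"

end

theory Submission
  imports Defs
begin

text \<open>With \<open>u\<close> the basis biorthogonal to \<open>e\<close>, \<open>K\<close> consists of the \<open>v\<close> with all \<open>u i \<bullet> v \<ge> 0\<close>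
  and \<open>K\<^sub>\<epsilon>\<close> of those with all \<open>\<epsilon> i * (u i \<bullet> v) \<ge> 0\<close>. Projecting suitable test points onto
  \<open>K\<close> shows that isotonicity forces \<open>u i \<bullet> u j \<le> 0\<close> for \<open>i \<noteq> j\<close>. The projection onto
  \<open>K\<^sub>\<epsilon>\<close> is described coordinatewise by complementarity conditions; for \<open>x \<le>\<^sub>K y\<close> with
  projections \<open>z, w\<close> they give \<open>(e i \<bullet> (d - k)) * (u i \<bullet> d) \<le> 0\<close>, where \<open>d = w - z\<close> and
  \<open>k = y - x \<in> K\<close>. Because the \<open>u i\<close> are pairwise obtuse, testing against the positive part
  \<open>V\<close> of \<open>d - k\<close> in the basis \<open>u\<close> yields \<open>V \<bullet> V \<le> 0\<close>, and from there \<open>d \<in> K\<close>.\<close>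

definition biorthogonal :: "('m::finite \<Rightarrow> real^'m) \<Rightarrow> ('m \<Rightarrow> real^'m) \<Rightarrow> bool" where
  "biorthogonal e u \<longleftrightarrow> (\<forall>i j. e i \<bullet> u j = (if i = j then 1 else 0))"

lemma biorthogonal_commute: "biorthogonal e u \<Longrightarrow> biorthogonal u e"
  unfolding biorthogonal_def by (metis inner_commute)

lemma biorthogonal_inner_sum:
  assumes "biorthogonal e u"
  shows "u j \<bullet> (\<Sum>i\<in>UNIV. t i *\<^sub>R e i) = t j"
proof -
  have "u j \<bullet> (\<Sum>i\<in>UNIV. t i *\<^sub>R e i) = (\<Sum>i\<in>UNIV. t i * (e i \<bullet> u j))"
    by (simp add: inner_sum_right inner_commute)
  also have "\<dots> = t j"
    using assms by (simp add: biorthogonal_def if_distrib[of "\<lambda>a. _ * a"] cong: if_cong)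
  finally show ?thesis .
qed

lemma biorthogonal_inj: "biorthogonal e u \<Longrightarrow> inj e"
  by (metis biorthogonal_def injI zero_neq_one)

lemma biorthogonal_span_UNIV:
  fixes e u :: "'m::finite \<Rightarrow> real^'m"
  assumes "biorthogonal e u"
  shows "span (range e) = UNIV"
proof -
  note inj = biorthogonal_inj[OF assms]
  have "independent (range e)"
  proof (rule independent_if_scalars_zero)
    fix c and v assume sum0: "(\<Sum>v\<in>range e. c v *\<^sub>R v) = 0" and "v \<in> range e"
    then obtain j where v: "v = e j" by blast
    have "(\<Sum>i\<in>UNIV. c (e i) *\<^sub>R e i) = 0"
      using sum0 by (simp add: sum.reindex[OF inj])
    then show "c v = 0"
      using biorthogonal_inner_sum[OF assms, of j "\<lambda>i. c (e i)"] by (simp add: v)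
  qed simp
  moreover have "dim (UNIV :: (real^'m) set) \<le> card (range e)"
    by (simp add: card_image[OF inj])
  ultimately show ?thesis
    using card_ge_dim_independent[of "range e" UNIV] by auto
qed

lemma biorthogonal_expansion:
  assumes "biorthogonal e u"
  shows "(\<Sum>j\<in>UNIV. (u j \<bullet> v) *\<^sub>R e j) = v"
proof -
  note inj = biorthogonal_inj[OF assms]
  obtain c where "v = (\<Sum>w\<in>range e. c w *\<^sub>R w)"
    using biorthogonal_span_UNIV[OF assms] span_finite[of "range e"] by auto
  then have v: "v = (\<Sum>i\<in>UNIV. c (e i) *\<^sub>R e i)"
    by (simp add: sum.reindex[OF inj])
  show ?thesis
    by (subst (2) v) (simp add: v biorthogonal_inner_sum[OF assms])
qed

lemma lin_indep_family_sum_eq_0: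
  fixes e :: "'m::finite \<Rightarrow> real^'m"
  assumes "lin_indep_family e" "(\<Sum>i\<in>UNIV. c i *\<^sub>R e i) = 0"
  shows "c i = 0"
proof -
  have inj: "inj e" and ind: "independent (range e)"
    using assms(1) unfolding lin_indep_family_def by auto
  have "(\<Sum>v\<in>range e. c (inv e v) *\<^sub>R v) = 0"
    using assms(2) by (simp add: sum.reindex[OF inj] inj)
  then have "c (inv e (e i)) = 0"
    using independentD[OF ind _ order_refl, of "\<lambda>v. c (inv e v)" "e i"] by simp
  then show ?thesis
    by (simp add: inv_f_f[OF inj])
qed

lemma biorthogonal_exists:
  fixes e :: "'m::finite \<Rightarrow> real^'m"
  assumes "lin_indep_family e"
  obtains u where "biorthogonal e u"
proof -
  define A :: "real^'m^'m" where "A = (\<chi> i. e i)"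
  have "\<exists>B::real^'m^'m. A ** B = mat 1"
    unfolding matrix_right_invertible_independent_rows
  proof (intro allI impI)
    fix c :: "'m \<Rightarrow> real" and i
    assume "(\<Sum>i\<in>UNIV. c i *s row i A) = 0"
    then have "(\<Sum>i\<in>UNIV. c i *\<^sub>R e i) = 0"
      by (simp add: A_def row_def scalar_mult_eq_scaleR vec_lambda_eta)
    then show "c i = 0"
      using lin_indep_family_sum_eq_0[OF assms] by blast
  qed
  then obtain B :: "real^'m^'m" where AB: "A ** B = mat 1" by blast
  have "e i \<bullet> column j B = (A ** B) $ i $ j" for i j
    by (simp add: inner_vec_def column_def A_def matrix_matrix_mult_def)
  then have "biorthogonal e (\<lambda>j. column j B)"
    unfolding biorthogonal_def AB by (simp add: mat_def)
  then show ?thesis ..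
qed

lemma biorthogonal_sign_scale:
  assumes "biorthogonal e u" "\<And>i. \<bar>s i\<bar> = 1"
  shows "biorthogonal (\<lambda>i. s i *\<^sub>R e i) (\<lambda>i. s i *\<^sub>R u i)"
  unfolding biorthogonal_def
proof (intro allI)
  fix i j
  have "(s i *\<^sub>R e i) \<bullet> (s j *\<^sub>R u j) = s i * s j * (e i \<bullet> u j)"
    by simp
  moreover have "s i * s i = 1"
    using assms(2)[of i] by (metis abs_mult_self_eq mult_1_left)
  moreover have "e i \<bullet> u j = (if i = j then 1 else 0)"
    using assms(1) unfolding biorthogonal_def by blast
  ultimately show "(s i *\<^sub>R e i) \<bullet> (s j *\<^sub>R u j) = (if i = j then 1 else 0)"
    by (cases "i = j") simp_all
qed

lemma simplicial_cone_eq_dual_halfspaces: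
  assumes "biorthogonal e u"
  shows "simplicial_cone e = {v. \<forall>i. 0 \<le> u i \<bullet> v}"
proof (intro set_eqI iffI)
  fix v assume "v \<in> simplicial_cone e"
  then obtain t where "\<forall>i. t i \<ge> 0" and "v = (\<Sum>i\<in>UNIV. t i *\<^sub>R e i)"
    unfolding simplicial_cone_def by blast
  then show "v \<in> {v. \<forall>i. 0 \<le> u i \<bullet> v}"
    by (simp add: biorthogonal_inner_sum[OF assms])
next
  fix v assume "v \<in> {v. \<forall>i. 0 \<le> u i \<bullet> v}"
  then show "v \<in> simplicial_cone e"
    unfolding simplicial_cone_def
    by (intro CollectI exI[of _ "\<lambda>i. u i \<bullet> v"]) (simp add: biorthogonal_expansion[OF assms])
qed

lemma zero_in_simplicial_cone: "0 \<in> simplicial_cone e"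
  unfolding simplicial_cone_def by (intro CollectI exI[of _ "\<lambda>_. 0"]) simp

lemma closed_convex_simplicial_cone:
  assumes "biorthogonal e u"
  shows "closed (simplicial_cone e)" "convex (simplicial_cone e)"
proof -
  have eq: "simplicial_cone e = (\<Inter>i. {v. u i \<bullet> v \<ge> 0})"
    unfolding simplicial_cone_eq_dual_halfspaces[OF assms] by auto
  show "closed (simplicial_cone e)"
    unfolding eq by (intro closed_INT ballI closed_halfspace_ge)
  show "convex (simplicial_cone e)"
    unfolding eq by (intro convex_INT convex_halfspace_ge)
qed

lemma closest_point_eqI:
  fixes a p :: "'a::euclidean_space"
  assumes "convex S" "closed S" "p \<in> S" "\<And>z. z \<in> S \<Longrightarrow> (a - p) \<bullet> (z - p) \<le> 0"
  shows "closest_point S a = p"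
proof -
  have "dist a p \<le> dist a z" if "z \<in> S" for z
  proof -
    have "(a - z) \<bullet> (a - z) = (a - p) \<bullet> (a - p) - 2 * ((a - p) \<bullet> (z - p)) + (z - p) \<bullet> (z - p)"
      by (simp add: inner_diff_left inner_diff_right inner_commute algebra_simps)
    then have "(a - p) \<bullet> (a - p) \<le> (a - z) \<bullet> (a - z)"
      using assms(4)[OF that] inner_ge_zero[of "z - p"] by linarith
    then show ?thesis
      by (simp add: dist_norm norm_le)
  qed
  then show ?thesis
    using closest_point_unique[OF assms(1-3)] by metis
qed

lemma closest_point_simplicial_cone:
  fixes e u :: "'m::finite \<Rightarrow> real^'m" and x :: "real^'m"
  assumes "biorthogonal e u"
  defines "z \<equiv> closest_point (simplicial_cone e) x"
  shows "0 \<le> u i \<bullet> z" "e i \<bullet> (x - z) \<le> 0" "(e i \<bullet> (x - z)) * (u i \<bullet> z) = 0"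
proof -
  let ?K = "simplicial_cone e"
  have K: "?K = {v. \<forall>i. 0 \<le> u i \<bullet> v}"
    by (rule simplicial_cone_eq_dual_halfspaces[OF assms(1)])
  note cK = closed_convex_simplicial_cone[OF assms(1)]
  have "z \<in> ?K"
    unfolding z_def using closest_point_in_set[OF cK(1)] zero_in_simplicial_cone by blast
  then show zi: "0 \<le> u i \<bullet> z"
    by (simp add: K)
  have ue: "u k \<bullet> e i = (if k = i then 1 else 0)" for k
    using biorthogonal_commute[OF assms(1)] unfolding biorthogonal_def by blast
  text \<open>Moving \<open>z\<close> along \<open>e i\<close> stays inside the cone as long as the \<open>i\<close>-th coordinate
    remains nonnegative, so the variational inequality of the projection applies.\<close>
  have move: "t * (e i \<bullet> (x - z)) \<le> 0" if "0 \<le> u i \<bullet> z + t" for t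
  proof -
    have "z + t *\<^sub>R e i \<in> ?K"
      using \<open>z \<in> ?K\<close> that by (auto simp: K inner_add_right ue)
    from closest_point_dot[OF cK(2,1) this, of x]
    show ?thesis
      by (simp add: z_def inner_commute)
  qed
  show "e i \<bullet> (x - z) \<le> 0"
    using move[of 1] zi by simp
  have "(- (u i \<bullet> z)) * (e i \<bullet> (x - z)) \<le> 0" "(u i \<bullet> z) * (e i \<bullet> (x - z)) \<le> 0"
    using move[of "- (u i \<bullet> z)"] move[of "u i \<bullet> z"] zi by simp_all
  then show "(e i \<bullet> (x - z)) * (u i \<bullet> z) = 0"
    by (simp add: mult.commute)
qed

lemma isotone_projection_cone_dual_obtuse:
  fixes e u :: "'m::finite \<Rightarrow> real^'m"
  assumes "biorthogonal e u" "isotone_projection_set (simplicial_cone e) (simplicial_cone e)"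
    and "i \<noteq> j"
  shows "u i \<bullet> u j \<le> 0"
proof -
  let ?K = "simplicial_cone e"
  have K: "?K = {v. \<forall>i. 0 \<le> u i \<bullet> v}"
    by (rule simplicial_cone_eq_dual_halfspaces[OF assms(1)])
  have ue: "u k \<bullet> e l = (if l = k then 1 else 0)" for k l
    using biorthogonal_commute[OF assms(1)] unfolding biorthogonal_def by metis
  text \<open>The point \<open>p\<close> has \<open>j\<close>-th coordinate \<open>0\<close>, so \<open>x - p = - u j\<close> is normal to the cone
    at \<open>p\<close> and \<open>p\<close> is the projection of \<open>x\<close>. The other coordinates are so large that
    \<open>y = x + (u j \<bullet> u j) *\<^sub>R e j\<close> lies in the cone; isotonicity then puts \<open>y - p\<close> into the
    cone, and its \<open>i\<close>-th coordinate is \<open>- u i \<bullet> u j\<close>.\<close>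
  define M where "M = (\<Sum>k\<in>UNIV. \<bar>u k \<bullet> u j\<bar>)"
  have M: "\<bar>u k \<bullet> u j\<bar> \<le> M" for k
    unfolding M_def by (rule member_le_sum) auto
  define p where "p = (\<Sum>k\<in>UNIV. (if k = j then 0 else M) *\<^sub>R e k)"
  have up: "u k \<bullet> p = (if k = j then 0 else M)" for k
    unfolding p_def by (rule biorthogonal_inner_sum[OF assms(1)])
  define x where "x = p - u j"
  define y where "y = p + (u j \<bullet> u j) *\<^sub>R e j - u j"
  have "p \<in> ?K"
    using sum_nonneg[of UNIV "\<lambda>k. \<bar>u k \<bullet> u j\<bar>"] by (auto simp: K up M_def)
  then have Px: "closest_point ?K x = p"
    by (rule closest_point_eqI[OF closed_convex_simplicial_cone(2,1)[OF assms(1)]])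
      (auto simp: K x_def inner_diff_right up)
  have "0 \<le> u k \<bullet> y" for k
    using M[of k] by (cases "k = j") (auto simp: y_def inner_diff_right inner_add_right up ue inner_commute[of "u j" "u k"])
  then have "closest_point ?K y = y"
    by (intro closest_point_self) (simp add: K)
  moreover have "cone_le ?K x y"
    by (simp add: cone_le_def K x_def y_def ue)
  ultimately have "y - p \<in> ?K"
    using assms(2) Px unfolding isotone_projection_set_def cone_le_def by metis
  then have "0 \<le> u i \<bullet> (y - p)"
    by (simp add: K)
  then show ?thesis
    using assms(3) by (simp add: y_def inner_diff_right inner_add_right ue)
qed

lemma inner_pos_part_combination_le:
  fixes u :: "'i::finite \<Rightarrow> 'a::real_inner" and c :: "'i \<Rightarrow> real"
  assumes "\<And>i j. i \<noteq> j \<Longrightarrow> u i \<bullet> u j \<le> 0"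
  defines "V \<equiv> (\<Sum>i\<in>UNIV. max (c i) 0 *\<^sub>R u i)"
  shows "V \<bullet> V \<le> V \<bullet> (\<Sum>i\<in>UNIV. c i *\<^sub>R u i)"
proof -
  have "V \<bullet> V = (\<Sum>i\<in>UNIV. \<Sum>j\<in>UNIV. max (c i) 0 * max (c j) 0 * (u i \<bullet> u j))"
    unfolding V_def by (simp add: inner_sum_left inner_sum_right sum_distrib_left mult_ac inner_commute)
  also have "\<dots> \<le> (\<Sum>i\<in>UNIV. \<Sum>j\<in>UNIV. max (c i) 0 * c j * (u i \<bullet> u j))"
  proof (intro sum_mono)
    fix i j
    show "max (c i) 0 * max (c j) 0 * (u i \<bullet> u j) \<le> max (c i) 0 * c j * (u i \<bullet> u j)"
    proof (cases "i = j")
      case True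
      then show ?thesis by (simp add: max_def)
    next
      case False
      have "max (c i) 0 * c j \<le> max (c i) 0 * max (c j) 0"
        by (simp add: mult_left_mono)
      then show ?thesis
        using assms(1)[OF False] by (simp add: mult_right_mono_neg)
    qed
  qed
  also have "\<dots> = V \<bullet> (\<Sum>i\<in>UNIV. c i *\<^sub>R u i)"
    unfolding V_def
    by (simp add: inner_sum_left inner_sum_right sum_distrib_left mult_ac) (rule sum.swap)
  finally show ?thesis .
qed

lemma dual_coords_nonneg_if_complementary:
  fixes e u :: "'m::finite \<Rightarrow> real^'m"
  assumes "biorthogonal e u" "\<And>i j. i \<noteq> j \<Longrightarrow> u i \<bullet> u j \<le> 0"
    and k: "\<And>i. 0 \<le> u i \<bullet> k"
    and compl: "\<And>i. (e i \<bullet> (d - k)) * (u i \<bullet> d) \<le> 0"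
  shows "0 \<le> u i \<bullet> d"
proof -
  define c where "c i = e i \<bullet> (d - k)" for i
  define V where "V = (\<Sum>i\<in>UNIV. max (c i) 0 *\<^sub>R u i)"
  note ue = biorthogonal_commute[OF assms(1)]
  have dk: "d - k = (\<Sum>i\<in>UNIV. c i *\<^sub>R u i)"
    unfolding c_def by (rule biorthogonal_expansion[OF ue, symmetric])
  have "V \<bullet> d = (\<Sum>i\<in>UNIV. max (c i) 0 * (u i \<bullet> d))"
    unfolding V_def by (simp add: inner_sum_left)
  also have "\<dots> \<le> 0"
  proof (rule sum_nonpos)
    fix i
    show "max (c i) 0 * (u i \<bullet> d) \<le> 0"
      using compl[of i] by (cases "c i \<le> 0") (auto simp: c_def max_def mult_le_0_iff)
  qed
  finally have "V \<bullet> d \<le> 0" .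
  moreover have "0 \<le> V \<bullet> k"
    unfolding V_def by (simp add: inner_sum_left sum_nonneg k)
  moreover have "V \<bullet> V \<le> V \<bullet> (d - k)"
    unfolding dk V_def by (rule inner_pos_part_combination_le[OF assms(2)])
  ultimately have "\<not> 0 < V \<bullet> V"
    unfolding inner_diff_right by linarith
  then have "V = 0"
    by simp
  then have c_nonpos: "c l \<le> 0" for l
    using biorthogonal_inner_sum[OF ue, of l "\<lambda>i. max (c i) 0"] by (simp add: V_def)
  show ?thesis
  proof (cases "c i = 0")
    case False
    then show ?thesis
      using compl[of i] c_nonpos[of i] unfolding c_def by (simp add: mult_le_0_iff)
  next
    case True
    text \<open>Then \<open>u i \<bullet> d\<close> is \<open>u i \<bullet> k\<close> plus the combination of the obtuse products
      \<open>u i \<bullet> u j\<close>, \<open>j \<noteq> i\<close>, with the nonpositive coefficients \<open>c j\<close>.\<close>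
    have "0 \<le> (\<Sum>j\<in>UNIV. c j * (u i \<bullet> u j))"
      using True c_nonpos assms(2) by (intro sum_nonneg) (metis mult_eq_0_iff mult_nonpos_nonpos)
    also have "\<dots> = u i \<bullet> (d - k)"
      unfolding dk by (simp add: inner_sum_right)
    finally show ?thesis
      using k[of i] by (simp add: inner_diff_right)
  qed
qed

lemma closest_point_sign_cone_mono:
  fixes e u :: "'m::finite \<Rightarrow> real^'m" and s :: "'m \<Rightarrow> real"
  assumes "biorthogonal e u" "\<And>i j. i \<noteq> j \<Longrightarrow> u i \<bullet> u j \<le> 0" "\<And>i. \<bar>s i\<bar> = 1"
    and "cone_le (simplicial_cone e) x y"
  defines "D \<equiv> simplicial_cone (\<lambda>i. s i *\<^sub>R e i)"
  shows "cone_le (simplicial_cone e) (closest_point D x) (closest_point D y)"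
proof -
  define z where "z = closest_point D x"
  define w where "w = closest_point D y"
  note K = simplicial_cone_eq_dual_halfspaces[OF assms(1)]
  note proj = closest_point_simplicial_cone[OF biorthogonal_sign_scale[OF assms(1,3)]]
  have yx: "0 \<le> u i \<bullet> (y - x)" for i
    using assms(4) by (simp add: cone_le_def K)
  have compl: "(e i \<bullet> ((w - z) - (y - x))) * (u i \<bullet> (w - z)) \<le> 0" for i
  proof -
    define g where "g = s i * (e i \<bullet> (x - z))"
    define \<zeta> where "\<zeta> = s i * (u i \<bullet> z)"
    define h where "h = s i * (e i \<bullet> (y - w))"
    define \<omega> where "\<omega> = s i * (u i \<bullet> w)"
    have g: "g \<le> 0" "0 \<le> \<zeta>" "g * \<zeta> = 0"
      using proj[where x=x and i=i] by (simp_all add: D_def z_def g_def \<zeta>_def mult_ac)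
    have h: "h \<le> 0" "0 \<le> \<omega>" "h * \<omega> = 0"
      using proj[where x=y and i=i] by (simp_all add: D_def w_def h_def \<omega>_def mult_ac)
    have "s i * s i = 1"
      using assms(3)[of i] by (metis abs_mult_self_eq mult_1_left)
    then have "(e i \<bullet> ((w - z) - (y - x))) * (u i \<bullet> (w - z)) = (g - h) * (\<omega> - \<zeta>)"
      unfolding g_def h_def \<zeta>_def \<omega>_def inner_diff_right by algebra
    also have "\<dots> = g * \<omega> + h * \<zeta> - g * \<zeta> - h * \<omega>"
      by (simp add: algebra_simps)
    also have "\<dots> = g * \<omega> + h * \<zeta>"
      unfolding g(3) h(3) by simp
    also have "\<dots> \<le> 0"
      using mult_nonpos_nonneg[OF g(1) h(2)] mult_nonpos_nonneg[OF h(1) g(2)] by linarith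
    finally show ?thesis .
  qed
  have "0 \<le> u i \<bullet> (w - z)" for i
    using dual_coords_nonneg_if_complementary[OF assms(1,2) yx compl] .
  then show ?thesis
    by (simp add: cone_le_def K z_def w_def)
qed

lemma isotone_projection_set_sign_cone:
  fixes e u :: "'m::finite \<Rightarrow> real^'m" and s :: "'m \<Rightarrow> real"
  assumes "biorthogonal e u" "\<And>i j. i \<noteq> j \<Longrightarrow> u i \<bullet> u j \<le> 0" "\<And>i. \<bar>s i\<bar> = 1"
  shows "isotone_projection_set (simplicial_cone e) (simplicial_cone (\<lambda>i. s i *\<^sub>R e i))"
  unfolding isotone_projection_set_def
proof (intro conjI allI impI)
  show "closed (simplicial_cone (\<lambda>i. s i *\<^sub>R e i))" "convex (simplicial_cone (\<lambda>i. s i *\<^sub>R e i))"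
    by (rule closed_convex_simplicial_cone[OF biorthogonal_sign_scale[where s = s, OF assms(1,3)]])+
  show "simplicial_cone (\<lambda>i. s i *\<^sub>R e i) \<noteq> {}"
    using zero_in_simplicial_cone by blast
qed (rule closest_point_sign_cone_mono[where s = s and u = u, OF assms])

theorem proposition4:
  fixes e :: "'m::finite \<Rightarrow> real^'m"
  assumes "lin_indep_family e"
    and "isotone_projection_cone (simplicial_cone e)"
  shows "\<forall>\<epsilon>\<in>sign_vectors.
           isotone_projection_set (simplicial_cone e) (simplicial_cone (\<lambda>i. \<epsilon> i *\<^sub>R e i))"
proof -
  obtain u where dual: "biorthogonal e u"
    using biorthogonal_exists[OF assms(1)] .
  have "isotone_projection_set (simplicial_cone e) (simplicial_cone e)"
    using assms(2) unfolding isotone_projection_cone_def by blast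
  then have obtuse: "\<And>i j. i \<noteq> j \<Longrightarrow> u i \<bullet> u j \<le> 0"
    by (rule isotone_projection_cone_dual_obtuse[OF dual])
  show ?thesis
    unfolding sign_vectors_def
    using isotone_projection_set_sign_cone[OF dual obtuse] by blast
qed

end
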